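(* For every $n\ge1$ and $\pi\in\mathfrak S_n$, \[\sum_{T_\sigma\in\mathrm{Orb}(T_\pi)} x^{\mathrm{as}(\sigma)}=x^{\mathrm{leaf}(T_\pi)}(1+x)^{\,n-\mathrm{leaf}(T_\pi)}.\]
   Context: All trees are rooted binary trees in which each child of a node is designated as a left or a right child. For a finite totally ordered set $Y$, a min–max tree on $Y$ is such a tree whose nodes are labeled bijectively by $Y$ so that the label of each node is either the minimum or the maximum of the labels in its subtree. A node with at least one child is inner; an inner node is a min-node (resp. max-node) if its label is the minimum (resp. maximum) of the labels of its subtree. An HR-tree is a min–max tree in which every inner node $s$ has a nonempty right subtree containing the maximum label of the subtree of $s$ if $s$ is a min-node, and the minimum label of that subtree if $s$ is a max-node. The reading word $w(T)$ is the in-order reading $w(T)=w(L)\,\ell\,w(R)$ ($\ell$ the root label, $L,R$ the left and right subtrees). The map $T\mapsto w(T)$ is a bijection from HR-trees labeled by $[n]$ onto $\mathfrak S_n$; $T_\pi$ denotes the HR-tree with $w(T_\pi)=\pi$. $\mathrm{leaf}(T)$ is the number of leaves of $T$. HR-action: for $i\in[n]$ and an HR-tree $T_\pi$, let $v$ be the node labeled $\pi_i$. If $v$ is a leaf, $\psi_i(T_\pi)=T_\pi$. Otherwise let $R$ be the set consisting of $\pi_i$ and the labels of the right subtree of $v$; relabel the nodes of $v$ and its right subtree, keeping the shape, so that $v$ receives $\max R$ if $v$ is a min-node and $\min R$ if $v$ is a max-node, and the nodes of the right subtree receive the remaining elements of $R$ by the order-preserving bijection from their old labels; all other labels are unchanged.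 The $\psi_i$ are pairwise commuting involutions, and $\mathrm{Orb}(T)$ denotes the set of all trees obtained from $T$ by compositions of the $\psi_i$. $\mathrm{as}(\pi)$ is the maximal length $k$ of a subsequence $\pi_{i_1}\cdots\pi_{i_k}$ ($i_1<\dots<i_k$) of $\pi$ with $\pi_{i_1}>\pi_{i_2}<\pi_{i_3}>\cdots$ (length $1$ allowed). *)

theory Defs
  imports "HOL-Library.Tree" "HOL-Library.Sublist" "HOL-Computational_Algebra.Polynomial"
begin

(* Binary trees: HOL-Library 'a tree; Leaf = empty tree, Node l a r = node labelled a
   with left subtree l and right subtree r. A "leaf" of the paper is Node Leaf a Leaf. *)

fun leaf_count :: "nat tree \<Rightarrow> nat" where
  "leaf_count Leaf = 0"
| "leaf_count (Node l a r) =
     (if l = Leaf \<and> r = Leaf then 1 else leaf_count l + leaf_count r)"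

fun hr_cond :: "nat tree \<Rightarrow> bool" where
  "hr_cond Leaf = True"
| "hr_cond (Node l a r) =
     (hr_cond l \<and> hr_cond r \<and>
      (let S = set_tree (Node l a r) in
        (a = Min S \<or> a = Max S) \<and>
        ((l \<noteq> Leaf \<or> r \<noteq> Leaf) \<longrightarrow>
           r \<noteq> Leaf \<and>
           (if a = Min S then Max S \<in> set_tree r else Min S \<in> set_tree r))))"

definition hr_tree :: "nat \<Rightarrow> nat tree \<Rightarrow> bool" where
  "hr_tree n T \<longleftrightarrow> set_tree T = {1..n} \<and> distinct (inorder T) \<and> hr_cond T"

definition is_perm_word :: "nat \<Rightarrow> nat list \<Rightarrow> bool" where
  "is_perm_word n \<pi> \<longleftrightarrow> distinct \<pi> \<and> set \<pi> = {1..n}"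

definition T_of :: "nat \<Rightarrow> nat list \<Rightarrow> nat tree" where
  "T_of n \<pi> = (THE T. hr_tree n T \<and> inorder T = \<pi>)"

definition ord_bij :: "nat set \<Rightarrow> nat set \<Rightarrow> nat \<Rightarrow> nat" where
  "ord_bij A B x = sorted_list_of_set B ! card {y \<in> A. y < x}"

fun psi_at :: "nat \<Rightarrow> nat tree \<Rightarrow> nat tree" where
  "psi_at a Leaf = Leaf"
| "psi_at a (Node l b r) =
     (if b = a then
        (if l = Leaf \<and> r = Leaf then Node l b r
         else
           (let S = set_tree (Node l b r);
                R = insert b (set_tree r);
                new = (if b = Min S then Max R else Min R)
            in Node l new (map_tree (ord_bij (set_tree r) (R - {new})) r)))
      else Node (psi_at a l) b (psi_at a r))"

(* psi_i: act at the node labelled pi_i, where pi = w(T) (1-based position i) *)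
definition psi :: "nat \<Rightarrow> nat tree \<Rightarrow> nat tree" where
  "psi i T = psi_at (inorder T ! (i - 1)) T"

inductive_set Orb :: "nat \<Rightarrow> nat tree \<Rightarrow> nat tree set" for n T where
  Orb_refl: "T \<in> Orb n T"
| Orb_step: "T' \<in> Orb n T \<Longrightarrow> i \<in> {1..n} \<Longrightarrow> psi i T' \<in> Orb n T"

definition alternating :: "nat list \<Rightarrow> bool" where
  "alternating xs \<longleftrightarrow>
     (\<forall>j. Suc j < length xs \<longrightarrow>
        (if even j then xs ! j > xs ! Suc j else xs ! j < xs ! Suc j))"

definition as_len :: "nat list \<Rightarrow> nat" where
  "as_len \<pi> = Max {length s | s. subseq s \<pi> \<and> s \<noteq> [] \<and> alternating s}"

end

(*
  The action at an inner node only moves its label between the minimum and the maximum of the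
  labels of the node and its right subtree, relabelling that subtree order-preservingly. Hence the
  orbit of an HR-tree is a product of one binary choice per inner node.
  If the root label c of such a tree is the minimum (maximum), then in its reading word u c v every
  other letter is larger (smaller) than c, and a longest alternating subsequence of u c v consists
  of one of u, possibly c, and one of v starting with a descent (ascent); c contributes exactly
  when the parity of the part from u leaves room for it, and this happens for exactly one of the
  two choices at the root. By induction the generating function of the orbit of a subtree does
  not depend on whether the subsequences start with a descent or an ascent, so the two choices
  together give the factor 1 + x, and the sum is x^leaf (1 + x)^(n - leaf).
*)
theory Submission
  imports Defs
begin

section \<open>Longest alternating subsequences\<close>

definition alt_step :: "bool \<Rightarrow> nat \<Rightarrow> nat \<Rightarrow> bool" where
  "alt_step d x y \<longleftrightarrow> (if d then y < x else x < y)"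

fun alternates :: "bool \<Rightarrow> nat list \<Rightarrow> bool" where
  "alternates d (x # y # zs) \<longleftrightarrow> alt_step d x y \<and> alternates (\<not> d) (y # zs)"
| "alternates d [x] \<longleftrightarrow> True"
| "alternates d [] \<longleftrightarrow> True"

definition max_alt :: "bool \<Rightarrow> nat list \<Rightarrow> nat" where
  "max_alt d w = Max {length s | s. subseq s w \<and> alternates d s}"

lemma alternates_iff_nth:
  "alternates d s \<longleftrightarrow>
    (\<forall>j. Suc j < length s \<longrightarrow> alt_step (d = even j) (s ! j) (s ! Suc j))"
proof (induction d s rule: alternates.induct)
  case (1 d x y zs)
  have "(\<forall>j. Suc j < length (x # y # zs) \<longrightarrow> P j) \<longleftrightarrow>
      P 0 \<and> (\<forall>j. Suc j < length (y # zs) \<longrightarrow> P (Suc j))" for P :: "nat \<Rightarrow> bool"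
    by (auto simp: less_Suc_eq_0_disj)
  moreover have parity: "((\<not> d) = even j) \<longleftrightarrow> (d = odd j)" for j :: nat
    by auto
  ultimately show ?case
    using "1.IH" by (simp add: parity)
qed simp_all

lemma alternating_iff_alternates: "alternating s \<longleftrightarrow> alternates True s"
  unfolding alternates_iff_nth alternating_def alt_step_def by auto

lemma alternates_append_Cons_iff:
  "alternates d (xs @ y # ys) \<longleftrightarrow>
     alternates d (xs @ [y]) \<and> alternates (d = even (length xs)) (y # ys)"
proof (induction d xs rule: alternates.induct)
  case (1 d x x' xs)
  then show ?case by auto
qed auto

lemma alternates_appendD1: "alternates d (xs @ ys) \<Longrightarrow> alternates d xs"
  by (induction d xs rule: alternates.induct) auto

lemma alternates_appendD2: "alternates d (xs @ ys) \<Longrightarrow> alternates (d = even (length xs)) ys"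
  using alternates_append_Cons_iff[of d xs "hd ys" "tl ys"] by (cases ys) auto

lemma alternates_ConsD: "alternates d (x # xs) \<Longrightarrow> alternates (\<not> d) xs"
  using alternates_appendD2[of d "[x]" xs] by simp

lemma alternates_map:
  assumes "\<forall>x\<in>set s. \<forall>y\<in>set s. x < y \<longleftrightarrow> (if e then f x < f y else f y < f x)"
  shows "alternates d (map f s) \<longleftrightarrow> alternates (d = e) s"
  using assms
proof (induction d s rule: alternates.induct)
  case (1 d x y zs)
  then have "alt_step d (f x) (f y) \<longleftrightarrow> alt_step (d = e) x y"
    by (cases d) (cases e, auto simp: alt_step_def)+
  with 1 show ?case by (cases e) auto
qed auto

lemma set_subseq_subset: "subseq xs ys \<Longrightarrow> set xs \<subseteq> set ys"
  by (auto elim: list_emb_set)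

lemma finite_alternating_lengths: "finite {length s | s. subseq s w \<and> alternates d s}"
  by (rule finite_subset[of _ "{..length w}"]) (auto dest: list_emb_length)

lemma length_le_max_alt: "subseq s w \<Longrightarrow> alternates d s \<Longrightarrow> length s \<le> max_alt d w"
  unfolding max_alt_def by (rule Max_ge[OF finite_alternating_lengths]) blast

lemma max_alt_witness:
  obtains s where "subseq s w" "alternates d s" "length s = max_alt d w"
proof -
  have "length [] \<in> {length s | s. subseq s w \<and> alternates d s}"
    by force
  then have "max_alt d w \<in> {length s | s. subseq s w \<and> alternates d s}"
    unfolding max_alt_def by (intro Max_in[OF finite_alternating_lengths]) blast
  then show ?thesis
    using that by force
qed

lemma max_alt_le_length: "max_alt d w \<le> length w"
  by (metis list_emb_length max_alt_witness)

lemma max_alt_Nil [simp]: "max_alt d [] = 0"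
  using max_alt_le_length[of d "[]"] by simp

lemma max_alt_pos: "w \<noteq> [] \<Longrightarrow> 1 \<le> max_alt d w"
  using length_le_max_alt[of "[hd w]" w d] by (simp add: subseq_singleton_left)

lemma max_alt_singleton [simp]: "max_alt d [a] = 1"
  using max_alt_pos[of "[a]" d] max_alt_le_length[of d "[a]"] by simp

lemma max_alt_le_Suc: "max_alt e w \<le> max_alt d w + 1"
proof -
  obtain s where s: "subseq s w" "alternates e s" "length s = max_alt e w"
    by (rule max_alt_witness)
  have "length (tl s) \<le> max_alt d w" if "e \<noteq> d"
    using s that alternates_ConsD[of e "hd s" "tl s"]
    by (cases s) (auto intro!: length_le_max_alt dest: subseq_Cons')
  moreover have "length s \<le> max_alt e w"
    using s by simp
  ultimately show ?thesis
    using s by (cases "e = d") auto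
qed

lemma max_alt_map:
  assumes "\<forall>x\<in>set w. \<forall>y\<in>set w. x < y \<longleftrightarrow> (if e then f x < f y else f y < f x)"
  shows "max_alt d (map f w) = max_alt (d = e) w"
proof -
  have alt: "alternates d (map f s) \<longleftrightarrow> alternates (d = e) s" if "subseq s w" for s
    using that assms set_subseq_subset by (intro alternates_map) blast
  have "{length s | s. subseq s (map f w) \<and> alternates d s} =
      {length s | s. subseq s w \<and> alternates (d = e) s}"
  proof (intro equalityI subsetI)
    fix k
    assume "k \<in> {length s | s. subseq s (map f w) \<and> alternates d s}"
    then obtain s where s: "k = length s" "subseq s (map f w)" "alternates d s"
      by blast
    then obtain s' where "subseq s' w" "s = map f s'"
      by (metis nths_map subseq_conv_nths)
    with s alt show "k \<in> {length s | s. subseq s w \<and> alternates (d = e) s}"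
      by auto
  next
    fix k
    assume "k \<in> {length s | s. subseq s w \<and> alternates (d = e) s}"
    then obtain s where "k = length s" "subseq s w" "alternates (d = e) s"
      by blast
    with alt show "k \<in> {length s | s. subseq s (map f w) \<and> alternates d s}"
      by (auto intro!: exI[of _ "map f s"] subseq_map)
  qed
  then show ?thesis
    unfolding max_alt_def by simp
qed

lemma alternates_glue_min:
  assumes "alternates d s1" "even (length s1) \<noteq> d" "alternates True s3"
    and "\<forall>x\<in>set s1 \<union> set s3. a < x"
  shows "alternates d (s1 @ a # s3)"
proof -
  have "alternates d (s1 @ [a])"
  proof (cases s1 rule: rev_cases)
    case (snoc s1' x)
    then show ?thesis
      using assms alternates_append_Cons_iff[of d s1' x "[a]"] by (auto simp: alt_step_def)
  qed simp
  moreover have "alternates (d = even (length s1)) (a # s3)"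
    using assms by (cases s3) (auto simp: alt_step_def)
  ultimately show ?thesis
    using alternates_append_Cons_iff[of d s1 a s3] by blast
qed

lemma length_le_max_alt_Cons_min:
  assumes "\<forall>x\<in>set v. a < x" "v \<noteq> []" "subseq s (a # v)" "alternates e s"
  shows "length s \<le> max_alt True v + of_bool (\<not> e)"
proof (cases "s = [a] \<or> subseq s v")
  case True
  then show ?thesis
    using assms max_alt_pos[of v True] max_alt_le_Suc[of e v True] length_le_max_alt[of s v e]
    by (cases e) auto
next
  case False
  then obtain z s' where s: "s = a # z # s'" "subseq (z # s') v"
    using assms(3) by (cases s rule: remdups_adj.cases) (auto split: if_splits)
  then have "a < z"
    using assms(1) set_subseq_subset by fastforce
  then have "\<not> e"
    using assms(4) s by (cases e) (auto simp: alt_step_def)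
  then have "alternates True (z # s')"
    using assms(4) s by simp
  then show ?thesis
    using s \<open>\<not> e\<close> length_le_max_alt[of "z # s'" v True] by simp
qed

(*
  Splitting an optimal subsequence where it enters a # v bounds it from above. Conversely,
  optimal subsequences of u and v glue around a, after dropping the last letter of the one of u
  when its parity is wrong.
*)
lemma max_alt_append_min:
  assumes "\<forall>x\<in>set u \<union> set v. a < x" "v \<noteq> []"
  shows "max_alt d (u @ a # v) = max_alt d u + of_bool (even (max_alt d u) \<noteq> d) + max_alt True v"
    (is "_ = ?p + _ + ?q")
proof (rule antisym)
  obtain s where s: "subseq s (u @ a # v)" "alternates d s" "length s = max_alt d (u @ a # v)"
    by (rule max_alt_witness)
  then obtain s1 s2 where split: "s = s1 @ s2" "subseq s1 u" "subseq s2 (a # v)"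
    by (auto elim: subseq_appendE)
  have "length s1 \<le> ?p"
    using s split by (blast intro: length_le_max_alt dest: alternates_appendD1)
  moreover have "length s2 \<le> ?q + of_bool (even (length s1) \<noteq> d)"
    using s split assms length_le_max_alt_Cons_min[of v a s2 "d = even (length s1)"]
    by (auto dest: alternates_appendD2)
  ultimately show "max_alt d (u @ a # v) \<le> ?p + of_bool (even ?p \<noteq> d) + ?q"
    using s split by (cases "length s1 = ?p") (auto simp: of_bool_def split: if_splits)
next
  obtain s1 where s1: "subseq s1 u" "alternates d s1" "length s1 = ?p"
    by (rule max_alt_witness)
  obtain s3 where s3: "subseq s3 v" "alternates True s3" "length s3 = ?q"
    by (rule max_alt_witness)
  have above: "\<forall>x\<in>set s1 \<union> set s3. a < x"
    using assms(1) s1(1) s3(1) set_subseq_subset by blast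
  show "?p + of_bool (even ?p \<noteq> d) + ?q \<le> max_alt d (u @ a # v)"
  proof (cases "even ?p \<noteq> d")
    case True
    then have "alternates d (s1 @ a # s3)"
      using s1 s3 above by (intro alternates_glue_min) auto
    moreover have "subseq (s1 @ a # s3) (u @ a # v)"
      using s1 s3 by (simp add: list_emb_append_mono)
    ultimately have "length (s1 @ a # s3) \<le> max_alt d (u @ a # v)"
      by (rule length_le_max_alt[rotated])
    then show ?thesis
      using True s1 s3 by simp
  next
    case False
    show ?thesis
    proof (cases s1 rule: rev_cases)
      case Nil
      then have "subseq s3 (u @ a # v)" "d"
        using s1 s3 False by (auto intro: subseq_drop_many)
      then show ?thesis
        using Nil s1 s3 length_le_max_alt by fastforce
    next
      case (snoc s1' x)
      then have "?p = Suc (length s1')"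
        using s1 by simp
      then have "alternates d (s1' @ a # s3)"
        using s1 s3 snoc above False by (intro alternates_glue_min) (auto dest: alternates_appendD1)
      moreover have "subseq (s1' @ a # s3) (u @ a # v)"
        using s1 s3 snoc by (auto intro!: list_emb_append_mono dest: list_emb_appendD)
      ultimately have "length (s1' @ a # s3) \<le> max_alt d (u @ a # v)"
        by (rule length_le_max_alt[rotated])
      then show ?thesis
        using False s1 s3 snoc by simp
    qed
  qed
qed

lemma max_alt_append_max:
  assumes "\<forall>x\<in>set u \<union> set v. x < a" "v \<noteq> []"
  shows "max_alt d (u @ a # v) = max_alt d u + of_bool (even (max_alt d u) = d) + max_alt False v"
proof -
  define f where "f x = a - x" for x
  have reverses: "\<forall>x\<in>set w. \<forall>y\<in>set w. x < y \<longleftrightarrow> (if False then f x < f y else f y < f x)"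
    if w: "set w \<subseteq> set (u @ a # v)" for w
  proof -
    have le: "x \<le> a" if "x \<in> set w" for x
      using subsetD[OF w that] assms(1) by (auto simp: less_imp_le)
    have "x < y \<longleftrightarrow> a - y < a - x" if "x \<in> set w" "y \<in> set w" for x y
      using le[OF that(1)] le[OF that(2)] by linarith
    then show ?thesis
      unfolding f_def by simp
  qed
  have sub: "set u \<subseteq> set (u @ a # v)" "set v \<subseteq> set (u @ a # v)"
    by auto
  have u: "max_alt (\<not> d) (map f u) = max_alt d u"
    using max_alt_map[OF reverses[OF sub(1)], of "\<not> d"] by simp
  have v: "max_alt True (map f v) = max_alt False v"
    using max_alt_map[OF reverses[OF sub(2)], of True] by simp
  have "max_alt d (u @ a # v) = max_alt (\<not> d) (map f u @ f a # map f v)"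
    using max_alt_map[OF reverses[OF order_refl], of "\<not> d"] by simp
  also have "\<dots> = max_alt (\<not> d) (map f u) + of_bool (even (max_alt (\<not> d) (map f u)) \<noteq> (\<not> d))
      + max_alt True (map f v)"
    using assms unfolding f_def by (intro max_alt_append_min) auto
  also have "\<dots> = max_alt d u + of_bool (even (max_alt d u) = d) + max_alt False v"
    unfolding u v by (cases d) auto
  finally show ?thesis .
qed

lemma as_len_eq_max_alt:
  assumes "w \<noteq> []"
  shows "as_len w = max_alt True w"
proof -
  define A where "A = {length s | s. subseq s w \<and> s \<noteq> [] \<and> alternating s}"
  have lengths: "{length s | s. subseq s w \<and> alternates True s} = insert 0 A"
  proof (intro equalityI subsetI)
    fix k
    assume "k \<in> {length s | s. subseq s w \<and> alternates True s}"
    then obtain s where "k = length s" "subseq s w" "alternates True s"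
      by blast
    then show "k \<in> insert 0 A"
      by (cases "s = []") (auto simp: A_def alternating_iff_alternates)
  next
    fix k
    assume "k \<in> insert 0 A"
    moreover have "0 = length [] \<and> subseq [] w \<and> alternates True []"
      by simp
    ultimately show "k \<in> {length s | s. subseq s w \<and> alternates True s}"
      unfolding A_def alternating_iff_alternates by blast
  qed
  have "finite A"
    using finite_alternating_lengths[of w True] unfolding lengths by simp
  moreover have "subseq [hd w] w" "alternating [hd w]"
    using assms by (simp_all add: subseq_singleton_left alternating_def)
  then have "length [hd w] \<in> A"
    unfolding A_def by blast
  then have "A \<noteq> {}"
    by blast
  ultimately show ?thesis
    unfolding max_alt_def as_len_def A_def[symmetric] lengths by simp
qed

section \<open>Order-preserving bijections between finite sets\<close>

lemma strict_mono_on_Min: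
  assumes "strict_mono_on S f" "finite S" "S \<noteq> {}"
  shows "Min (f ` S) = f (Min S)"
proof (rule Min_eqI)
  show "finite (f ` S)" "f (Min S) \<in> f ` S"
    using assms Min_in[OF assms(2,3)] by simp_all
  show "f (Min S) \<le> y" if "y \<in> f ` S" for y
    using that assms by (auto intro!: strict_mono_on_leD[OF assms(1)] Min_in[OF assms(2,3)])
qed

lemma strict_mono_on_Max:
  assumes "strict_mono_on S f" "finite S" "S \<noteq> {}"
  shows "Max (f ` S) = f (Max S)"
proof (rule Max_eqI)
  show "finite (f ` S)" "f (Max S) \<in> f ` S"
    using assms Max_in[OF assms(2,3)] by simp_all
  show "y \<le> f (Max S)" if "y \<in> f ` S" for y
    using that assms by (auto intro!: strict_mono_on_leD[OF assms(1)] Max_in[OF assms(2,3)])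
qed

lemma sorted_list_of_set_image:
  assumes "finite A" "strict_mono_on A f"
  shows "sorted_list_of_set (f ` A) = map f (sorted_list_of_set A)"
proof -
  have "sorted_wrt (<) (map f (sorted_list_of_set A))"
    unfolding sorted_wrt_map
    by (rule sorted_wrt_mono_rel[OF _ strict_sorted_list_of_set])
      (use assms in \<open>auto dest: strict_mono_onD\<close>)
  then show ?thesis
    using assms by (intro strict_sorted_equal strict_sorted_list_of_set) auto
qed

definition rank :: "nat set \<Rightarrow> nat \<Rightarrow> nat" where
  "rank A x = card {y \<in> A. y < x}"

lemma rank_less_card: "finite A \<Longrightarrow> x \<in> A \<Longrightarrow> rank A x < card A"
  unfolding rank_def by (rule psubset_card_mono) auto

lemma strict_mono_on_rank: "finite A \<Longrightarrow> strict_mono_on A (rank A)"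
  unfolding rank_def by (intro strict_mono_onI psubset_card_mono) auto

lemma sorted_list_of_set_nth_rank:
  assumes "finite A" "x \<in> A"
  shows "sorted_list_of_set A ! rank A x = x"
proof -
  have "sorted_list_of_set A =
      sorted_list_of_set {y \<in> A. y < x} @ x # sorted_list_of_set {y \<in> A. x < y}"
    using assms by (intro strict_sorted_equal strict_sorted_list_of_set) (auto simp: sorted_wrt_append)
  then show ?thesis
    by (simp add: rank_def nth_append)
qed

lemma ord_bij_eq_nth_rank: "ord_bij A B x = sorted_list_of_set B ! rank A x"
  unfolding ord_bij_def rank_def ..

lemma strict_mono_on_ord_bij:
  assumes "finite A" "card A = card B"
  shows "strict_mono_on A (ord_bij A B)"
proof (rule strict_mono_onI)
  fix x y
  assume "x \<in> A" "y \<in> A" "x < y"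
  then have "rank A x < rank A y" "rank A y < length (sorted_list_of_set B)"
    using assms strict_mono_onD[OF strict_mono_on_rank[OF assms(1)]] rank_less_card[OF assms(1)]
    by auto
  then show "ord_bij A B x < ord_bij A B y"
    unfolding ord_bij_eq_nth_rank by (rule sorted_wrt_nth_less[OF strict_sorted_list_of_set])
qed

lemma ord_bij_image:
  assumes "finite A" "finite B" "card A = card B"
  shows "ord_bij A B ` A = B"
proof (rule card_subset_eq[OF assms(2)])
  show "ord_bij A B ` A \<subseteq> B"
    using assms rank_less_card[OF assms(1)] nth_mem[of _ "sorted_list_of_set B"]
    by (auto simp: ord_bij_eq_nth_rank)
  show "card (ord_bij A B ` A) = card B"
    using assms strict_mono_on_ord_bij[OF assms(1,3)]
    by (simp add: card_image strict_mono_on_imp_inj_on)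
qed

lemma ord_bij_eqI:
  assumes "finite A" "strict_mono_on A f" "f ` A = B" "x \<in> A"
  shows "ord_bij A B x = f x"
  using assms rank_less_card[OF assms(1,4)]
  by (auto simp: ord_bij_eq_nth_rank sorted_list_of_set_image sorted_list_of_set_nth_rank)

lemma ord_bij_self: "finite A \<Longrightarrow> x \<in> A \<Longrightarrow> ord_bij A A x = x"
  using ord_bij_eqI[of A id A x] by (simp add: strict_mono_on_id)

lemma ord_bij_comp:
  assumes "finite A" "finite B" "finite C" "card A = card B" "card B = card C" "x \<in> A"
  shows "ord_bij B C (ord_bij A B x) = ord_bij A C x"
proof -
  have "strict_mono_on A (ord_bij B C \<circ> ord_bij A B)"
    using assms
    by (intro monotone_on_o[OF strict_mono_on_ord_bij strict_mono_on_ord_bij]) (auto simp: ord_bij_image)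
  moreover have "(ord_bij B C \<circ> ord_bij A B) ` A = C"
    using assms by (simp only: image_comp[symmetric] ord_bij_image)
  ultimately show ?thesis
    using ord_bij_eqI[of A _ C x] assms by simp
qed

lemma ord_bij_conj:
  assumes "finite A" "finite B" "card A = card B" "strict_mono_on (A \<union> B) f" "x \<in> A"
  shows "ord_bij (f ` A) (f ` B) (f x) = f (ord_bij A B x)"
proof -
  have f_A: "strict_mono_on A f" and f_B: "strict_mono_on B f"
    using assms(4) by (auto intro: monotone_on_subset)
  have "card (f ` A) = card (f ` B)"
    using assms(3) f_A f_B by (simp add: card_image strict_mono_on_imp_inj_on)
  then have "strict_mono_on A (ord_bij (f ` A) (f ` B) \<circ> f)"
    using assms f_A by (intro monotone_on_o[OF strict_mono_on_ord_bij]) auto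
  moreover have "strict_mono_on A (f \<circ> ord_bij A B)"
    using assms f_B by (intro monotone_on_o[OF f_B strict_mono_on_ord_bij]) (auto simp: ord_bij_image)
  moreover have "(ord_bij (f ` A) (f ` B) \<circ> f) ` A = f ` B" "(f \<circ> ord_bij A B) ` A = f ` B"
    using assms \<open>card (f ` A) = card (f ` B)\<close>
    by (simp_all only: image_comp[symmetric] ord_bij_image finite_imageI)
  ultimately show ?thesis
    using ord_bij_eqI[of A _ "f ` B" x] assms(1,5) by (metis comp_apply)
qed

section \<open>Relabelling HR-trees\<close>

abbreviation is_hr :: "nat tree \<Rightarrow> bool" where
  "is_hr t \<equiv> hr_cond t \<and> distinct (inorder t)"

lemma hr_cond_map_tree:
  assumes "strict_mono_on (set_tree t) f"
  shows "hr_cond (map_tree f t) \<longleftrightarrow> hr_cond t"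
  using assms
proof (induction t)
  case (Node l a r)
  define S where "S = set_tree (Node l a r)"
  have mono: "strict_mono_on S f"
    using Node.prems by (simp add: S_def)
  then have inj: "inj_on f S"
    by (rule strict_mono_on_imp_inj_on)
  have S: "finite S" "S \<noteq> {}" "a \<in> S" "set_tree r \<subseteq> S"
    by (auto simp: S_def)
  then have extremes: "Min (f ` S) = f (Min S)" "Max (f ` S) = f (Max S)" "Min S \<in> S" "Max S \<in> S"
    using mono by (simp_all add: strict_mono_on_Min strict_mono_on_Max)
  have "hr_cond (map_tree f l) \<longleftrightarrow> hr_cond l" "hr_cond (map_tree f r) \<longleftrightarrow> hr_cond r"
    using Node.IH Node.prems by (auto intro: monotone_on_subset)
  moreover have "set_tree (Node (map_tree f l) (f a) (map_tree f r)) = f ` S"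
    "set_tree (map_tree f r) = f ` set_tree r"
    by (auto simp: S_def tree.set_map)
  ultimately have "hr_cond (map_tree f (Node l a r)) \<longleftrightarrow>
      hr_cond l \<and> hr_cond r \<and> (a = Min S \<or> a = Max S) \<and>
      ((l \<noteq> Leaf \<or> r \<noteq> Leaf) \<longrightarrow>
        r \<noteq> Leaf \<and> (if a = Min S then Max S \<in> set_tree r else Min S \<in> set_tree r))"
    using S extremes
    by (simp add: Let_def inj_on_eq_iff[OF inj] inj_on_image_mem_iff[OF inj] del: tree.set)
  also have "\<dots> \<longleftrightarrow> hr_cond (Node l a r)"
    unfolding hr_cond.simps(2) Let_def S_def ..
  finally show ?case .
qed simp

lemma is_hr_inner_node:
  assumes "is_hr (Node l a r)" "l \<noteq> Leaf \<or> r \<noteq> Leaf"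
  defines "R \<equiv> insert a (set_tree r)"
  shows "r \<noteq> Leaf" "a \<in> {Min R, Max R}" "Min R \<noteq> Max R"
    and "Min (set_tree l \<union> R) = Min R" "Max (set_tree l \<union> R) = Max R"
proof -
  define S where "S = set_tree l \<union> R"
  have S_Node: "set_tree (Node l a r) = S"
    by (auto simp: S_def R_def)
  have root: "a = Min S \<or> a = Max S" "r \<noteq> Leaf"
    and opposite: "if a = Min S then Max S \<in> set_tree r else Min S \<in> set_tree r"
    using assms(1,2) unfolding hr_cond.simps(2) Let_def S_Node by auto
  have "a \<notin> set_tree r"
    using assms(1) by auto
  then have "Min S \<noteq> Max S"
    using root opposite by metis
  have "Min S \<in> R" "Max S \<in> R" "R \<subseteq> S" "finite S"
    using root opposite by (auto simp: R_def S_def split: if_splits)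
  then have "Min R = Min S" "Max R = Max S"
    by (auto intro!: Min_eqI Max_eqI intro: finite_subset)
  then show "r \<noteq> Leaf" "a \<in> {Min R, Max R}" "Min R \<noteq> Max R"
    "Min (set_tree l \<union> R) = Min R" "Max (set_tree l \<union> R) = Max R"
    using root \<open>Min S \<noteq> Max S\<close> by (auto simp: S_def)
qed

definition relabel_node :: "nat set \<Rightarrow> nat tree \<Rightarrow> nat \<Rightarrow> nat tree \<Rightarrow> nat tree" where
  "relabel_node R l c r = Node l c (map_tree (ord_bij (set_tree r) (R - {c})) r)"

lemma psi_at_root:
  fixes a :: nat
  assumes "l \<noteq> Leaf \<or> r \<noteq> Leaf"
  defines "R \<equiv> insert a (set_tree r)"
  shows "psi_at a (Node l a r) =
    relabel_node R l (if a = Min (set_tree l \<union> R) then Max R else Min R) r"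
proof -
  have "set_tree (Node l a r) = set_tree l \<union> R"
    by (auto simp: R_def)
  then show ?thesis
    using assms(1) unfolding psi_at.simps(2) Let_def relabel_node_def R_def by simp
qed

lemma psi_at_not_in: "b \<notin> set_tree t \<Longrightarrow> psi_at b t = t"
  by (induction t) auto

lemma ord_bij_Diff_singleton:
  assumes "finite R" "c \<in> R" "card R = Suc (card (set_tree r))"
  defines "g \<equiv> ord_bij (set_tree r) (R - {c})"
  shows "strict_mono_on (set_tree r) g" "g ` set_tree r = R - {c}"
  using assms by (simp_all add: strict_mono_on_ord_bij ord_bij_image)

lemma map_tree_relabel_node:
  assumes "finite R" "c \<in> R" "card R = Suc (card (set_tree r))"
    and "strict_mono_on (set_tree l \<union> R \<union> set_tree r) f"
  shows "map_tree f (relabel_node R l c r) = relabel_node (f ` R) (map_tree f l) (f c) (map_tree f r)"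
proof -
  have inj: "inj_on f (set_tree l \<union> R \<union> set_tree r)"
    using assms(4) by (rule strict_mono_on_imp_inj_on)
  then have "f ` R - {f c} = f ` (R - {c})"
    using assms(2) by (auto simp: inj_on_def)
  moreover have "ord_bij (f ` set_tree r) (f ` (R - {c})) (f x) = f (ord_bij (set_tree r) (R - {c}) x)"
    if "x \<in> set_tree r" for x
    using assms that by (intro ord_bij_conj) (auto intro: monotone_on_subset)
  ultimately show ?thesis
    unfolding relabel_node_def by (simp add: tree.map_comp tree.set_map cong: tree.map_cong)
qed

lemma psi_at_map_tree:
  assumes "strict_mono_on (set_tree t) f" "distinct (inorder t)" "c \<in> set_tree t"
  shows "psi_at (f c) (map_tree f t) = map_tree f (psi_at c t)"
  using assms
proof (induction t)
  case (Node l b r)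
  have inj: "inj_on f (set_tree (Node l b r))"
    using Node.prems(1) by (rule strict_mono_on_imp_inj_on)
  have sub: "strict_mono_on (set_tree l) f" "strict_mono_on (set_tree r) f"
    using Node.prems(1) by (auto intro: monotone_on_subset)
  show ?case
  proof (cases "c = b")
    case False
    then consider "c \<in> set_tree l" "c \<notin> set_tree r" | "c \<in> set_tree r" "c \<notin> set_tree l"
      using Node.prems(2,3) by auto
    then show ?thesis
      using Node.IH sub Node.prems False inj
      by cases (auto simp: psi_at_not_in tree.set_map inj_on_eq_iff inj_on_image_mem_iff)
  next
    case True
    show ?thesis
    proof (cases "l = Leaf \<and> r = Leaf")
      case False
      then have inner: "l \<noteq> Leaf \<or> r \<noteq> Leaf" "map_tree f l \<noteq> Leaf \<or> map_tree f r \<noteq> Leaf"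
        by auto
      define R where "R = insert b (set_tree r)"
      define new where "new = (if b = Min (set_tree l \<union> R) then Max R else Min R)"
      have fin: "finite R" "R \<noteq> {}" "finite (set_tree l \<union> R)" "set_tree l \<union> R \<noteq> {}"
        by (auto simp: R_def)
      then have "new \<in> R"
        by (simp add: new_def)
      have card: "card R = Suc (card (set_tree r))"
        using Node.prems(2) by (simp add: R_def)
      have mono: "strict_mono_on (set_tree l \<union> R) f"
        using Node.prems(1) by (simp add: R_def)
      then have mono_R: "strict_mono_on R f" and inj: "inj_on f (set_tree l \<union> R)"
        by (auto intro: monotone_on_subset strict_mono_on_imp_inj_on)
      have images: "insert (f b) (set_tree (map_tree f r)) = f ` R"
        "set_tree (map_tree f l) \<union> f ` R = f ` (set_tree l \<union> R)"
        by (auto simp: R_def tree.set_map)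
      have "(if f b = Min (f ` (set_tree l \<union> R)) then Max (f ` R) else Min (f ` R)) = f new"
        using strict_mono_on_Min[OF mono fin(3,4)] strict_mono_on_Min[OF mono_R fin(1,2)]
          strict_mono_on_Max[OF mono_R fin(1,2)] inj_on_eq_iff[OF inj _ Min_in[OF fin(3,4)], of b]
        by (simp add: new_def R_def)
      then have "psi_at (f b) (map_tree f (Node l b r)) =
          relabel_node (f ` R) (map_tree f l) (f new) (map_tree f r)"
        using psi_at_root[OF inner(2), of "f b", unfolded images] by simp
      also have "\<dots> = map_tree f (relabel_node R l new r)"
        using fin(1) \<open>new \<in> R\<close> card mono
        by (intro map_tree_relabel_node[symmetric]) (auto simp: R_def Un_absorb2)
      also have "\<dots> = map_tree f (psi_at c (Node l b r))"
        using psi_at_root[OF inner(1), of b, folded R_def, folded new_def] True by simp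
      finally show ?thesis
        using True by simp
    qed (use True in simp)
  qed
qed simp

lemma is_hr_relabel_node:
  assumes "is_hr l" "is_hr r" "r \<noteq> Leaf" "finite R" "card R = Suc (card (set_tree r))"
    and "set_tree l \<inter> R = {}" "c \<in> {Min R, Max R}" "Min R \<noteq> Max R"
    and "Min (set_tree l \<union> R) = Min R" "Max (set_tree l \<union> R) = Max R"
  shows "is_hr (relabel_node R l c r)" "set_tree (relabel_node R l c r) = set_tree l \<union> R"
proof -
  define g where "g = ord_bij (set_tree r) (R - {c})"
  have "R \<noteq> {}"
    using assms(5) by auto
  then have "c \<in> R"
    using assms(7) Min_in[OF assms(4)] Max_in[OF assms(4)] by auto
  then have mono: "strict_mono_on (set_tree r) g" and image: "g ` set_tree r = R - {c}"
    using ord_bij_Diff_singleton[OF assms(4) _ assms(5)] unfolding g_def by auto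
  have node: "relabel_node R l c r = Node l c (map_tree g r)"
    by (simp add: relabel_node_def g_def)
  have set: "set_tree (Node l c (map_tree g r)) = set_tree l \<union> R"
    using image \<open>c \<in> R\<close> by (auto simp: tree.set_map)
  then show "set_tree (relabel_node R l c r) = set_tree l \<union> R"
    by (simp add: node)
  have "distinct (inorder (Node l c (map_tree g r)))"
    using assms(1,2,6) image \<open>c \<in> R\<close> strict_mono_on_imp_inj_on[OF mono]
    by (auto simp: inorder_map distinct_map)
  moreover have "hr_cond (Node l c (map_tree g r))"
  proof -
    have "(if c = Min R then Max R else Min R) \<in> set_tree (map_tree g r)"
      using image assms(7,8) Min_in[OF assms(4) \<open>R \<noteq> {}\<close>] Max_in[OF assms(4) \<open>R \<noteq> {}\<close>]
      by (auto simp: tree.set_map)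
    then show ?thesis
      using assms(1,2,3,7,8,9,10) mono hr_cond_map_tree
      unfolding hr_cond.simps(2) Let_def set by auto
  qed
  ultimately show "is_hr (relabel_node R l c r)"
    by (simp add: node)
qed

lemma psi_at_relabel_node:
  assumes "finite R" "card R = Suc (card (set_tree r))" "c \<in> {Min R, Max R}"
    and "Min (set_tree l \<union> R) = Min R" "r \<noteq> Leaf"
  shows "psi_at c (relabel_node R l c r) = relabel_node R l (if c = Min R then Max R else Min R) r"
proof -
  define g where "g = ord_bij (set_tree r) (R - {c})"
  define new where "new = (if c = Min R then Max R else Min R)"
  have "R \<noteq> {}"
    using assms(2) by auto
  then have "c \<in> R" "new \<in> R"
    using assms(3) Min_in[OF assms(1)] Max_in[OF assms(1)] by (auto simp: new_def)
  then have image: "g ` set_tree r = R - {c}"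
    using ord_bij_Diff_singleton(2)[OF assms(1) _ assms(2)] unfolding g_def by auto
  then have R_eq: "insert c (set_tree (map_tree g r)) = R"
    using \<open>c \<in> R\<close> by (auto simp: tree.set_map)
  have "psi_at c (relabel_node R l c r) = relabel_node R l new (map_tree g r)"
    using psi_at_root[of l "map_tree g r" c, unfolded R_eq assms(4)] assms(5)
    by (simp add: relabel_node_def g_def new_def)
  also have "\<dots> = Node l new (map_tree (ord_bij (R - {c}) (R - {new}) \<circ> g) r)"
    by (simp add: relabel_node_def tree.set_map image tree.map_comp)
  also have "\<dots> = relabel_node R l new r"
    unfolding relabel_node_def
  proof (intro arg_cong[where f = "Node l new"] tree.map_cong0)
    fix z
    assume "z \<in> set_tree r"
    moreover have "card (set_tree r) = card (R - {c})" "card (R - {c}) = card (R - {new})"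
      using assms(1,2) \<open>c \<in> R\<close> \<open>new \<in> R\<close> by simp_all
    ultimately show "(ord_bij (R - {c}) (R - {new}) \<circ> g) z = ord_bij (set_tree r) (R - {new}) z"
      using assms(1) by (simp add: g_def ord_bij_comp)
  qed
  finally show ?thesis
    by (simp add: new_def)
qed

section \<open>The orbit of an HR-tree\<close>

fun hr_orbit :: "nat tree \<Rightarrow> nat tree set" where
  "hr_orbit Leaf = {Leaf}"
| "hr_orbit (Node l a r) =
     (if l = Leaf \<and> r = Leaf then {Node l a r}
      else (let R = insert a (set_tree r) in
        (\<lambda>(l', c, r'). relabel_node R l' c r') ` (hr_orbit l \<times> {Min R, Max R} \<times> hr_orbit r)))"

lemma hr_orbit_inner_iff:
  fixes a :: nat
  assumes "l \<noteq> Leaf \<or> r \<noteq> Leaf"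
  defines "R \<equiv> insert a (set_tree r)"
  shows "T \<in> hr_orbit (Node l a r) \<longleftrightarrow>
    (\<exists>l' c r'. T = relabel_node R l' c r' \<and>
      l' \<in> hr_orbit l \<and> c \<in> {Min R, Max R} \<and> r' \<in> hr_orbit r)"
  using assms by (auto simp: Let_def image_iff)

lemma relabel_node_in_hr_orbit:
  assumes "l \<noteq> Leaf \<or> r \<noteq> Leaf" "l' \<in> hr_orbit l" "r' \<in> hr_orbit r"
    and "c \<in> {Min (insert a (set_tree r)), Max (insert a (set_tree r))}"
  shows "relabel_node (insert a (set_tree r)) l' c r' \<in> hr_orbit (Node l a r)"
  using hr_orbit_inner_iff[OF assms(1)] assms(2-4) by blast

lemma hr_orbit_is_hr:
  "is_hr T \<Longrightarrow> T' \<in> hr_orbit T \<Longrightarrow> is_hr T' \<and> set_tree T' = set_tree T"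
proof (induction T arbitrary: T')
  case (Node l a r)
  show ?case
  proof (cases "l = Leaf \<and> r = Leaf")
    case False
    then have inner: "l \<noteq> Leaf \<or> r \<noteq> Leaf"
      by simp
    define R where "R = insert a (set_tree r)"
    obtain l' c r' where T': "T' = relabel_node R l' c r'" "l' \<in> hr_orbit l"
      "c \<in> {Min R, Max R}" "r' \<in> hr_orbit r"
      using Node.prems(2) hr_orbit_inner_iff[OF inner] unfolding R_def by blast
    have "is_hr l" "is_hr r"
      using Node.prems(1) by auto
    then have l': "is_hr l'" "set_tree l' = set_tree l" and r': "is_hr r'" "set_tree r' = set_tree r"
      using Node.IH T' by blast+
    note inner_facts = is_hr_inner_node[OF Node.prems(1) inner, folded R_def]
    have "r' \<noteq> Leaf"
      using inner_facts(1) r'(2) by auto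
    moreover have "finite R" "card R = Suc (card (set_tree r'))" "set_tree l' \<inter> R = {}"
      using Node.prems(1) l'(2) r'(2) by (auto simp: R_def)
    ultimately have "is_hr T'" "set_tree T' = set_tree l' \<union> R"
      using is_hr_relabel_node[OF l'(1) r'(1)] T' inner_facts(3-5) l'(2) by auto
    then show ?thesis
      using l'(2) by (auto simp: R_def)
  qed (use Node.prems in simp)
qed simp

lemma relabel_node_self:
  "a \<notin> set_tree r \<Longrightarrow> relabel_node (insert a (set_tree r)) l a r = Node l a r"
  by (simp add: relabel_node_def ord_bij_self tree.map_ident_strong)

lemma self_in_hr_orbit: "is_hr T \<Longrightarrow> T \<in> hr_orbit T"
proof (induction T)
  case (Node l a r)
  show ?case
  proof (cases "l = Leaf \<and> r = Leaf")
    case False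
    then have inner: "l \<noteq> Leaf \<or> r \<noteq> Leaf"
      by simp
    have "l \<in> hr_orbit l" "r \<in> hr_orbit r"
      using Node by auto
    then have "relabel_node (insert a (set_tree r)) l a r \<in> hr_orbit (Node l a r)"
      using relabel_node_in_hr_orbit[OF inner] is_hr_inner_node(2)[OF Node.prems inner] by blast
    moreover have "relabel_node (insert a (set_tree r)) l a r = Node l a r"
      using Node.prems by (intro relabel_node_self) auto
    ultimately show ?thesis
      by metis
  qed simp
qed simp

lemma psi_at_in_hr_orbit:
  "is_hr T \<Longrightarrow> T' \<in> hr_orbit T \<Longrightarrow> psi_at b T' \<in> hr_orbit T"
proof (induction T arbitrary: T' b)
  case (Node l a r)
  show ?case
  proof (cases "l = Leaf \<and> r = Leaf")
    case True
    then show ?thesis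
      using Node.prems by (auto simp: psi_at_not_in)
  next
    case False
    then have inner: "l \<noteq> Leaf \<or> r \<noteq> Leaf"
      by simp
    define R where "R = insert a (set_tree r)"
    obtain l' c r' where T': "T' = relabel_node R l' c r'" "l' \<in> hr_orbit l"
      "c \<in> {Min R, Max R}" "r' \<in> hr_orbit r"
      using Node.prems(2) hr_orbit_inner_iff[OF inner] unfolding R_def by blast
    have in_orbit: "relabel_node R l'' c'' r'' \<in> hr_orbit (Node l a r)"
      if "l'' \<in> hr_orbit l" "r'' \<in> hr_orbit r" "c'' \<in> {Min R, Max R}" for l'' r'' c''
      using relabel_node_in_hr_orbit[OF inner that(1,2) that(3)[unfolded R_def]] unfolding R_def .
    have hr: "is_hr l" "is_hr r"
      using Node.prems(1) by auto
    then have l': "is_hr l'" "set_tree l' = set_tree l" and r': "is_hr r'" "set_tree r' = set_tree r"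
      using hr_orbit_is_hr[OF hr(1) T'(2)] hr_orbit_is_hr[OF hr(2) T'(4)] by auto
    note inner_facts = is_hr_inner_node[OF Node.prems(1) inner, folded R_def]
    have disjoint: "set_tree l \<inter> R = {}" and card: "card R = Suc (card (set_tree r))"
      and fin: "finite R" "R \<noteq> {}"
      using Node.prems(1) by (auto simp: R_def)
    then have "c \<in> R"
      using T'(3) Min_in[OF fin] Max_in[OF fin] by blast
    define g where "g = ord_bij (set_tree r') (R - {c})"
    have mono: "strict_mono_on (set_tree r') g" and image: "g ` set_tree r' = R - {c}"
      using ord_bij_Diff_singleton[OF fin(1) \<open>c \<in> R\<close>] card r'(2) unfolding g_def by auto
    have T'_Node: "T' = Node l' c (map_tree g r')"
      by (simp add: T' relabel_node_def g_def)
    consider "b = c" | "b \<in> set_tree l'" | x where "x \<in> set_tree r'" "b = g x"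
      | "b \<notin> set_tree T'"
      using image by (auto simp: T'_Node tree.set_map)
    then show ?thesis
    proof cases
      case 1
      have "r' \<noteq> Leaf" "card R = Suc (card (set_tree r'))" "Min (set_tree l' \<union> R) = Min R"
        using inner_facts(1,4) card r'(2) l'(2) by auto
      then have "psi_at c (relabel_node R l' c r') =
          relabel_node R l' (if c = Min R then Max R else Min R) r'"
        using psi_at_relabel_node[OF fin(1) _ T'(3)] by blast
      then show ?thesis
        using 1 T' in_orbit by auto
    next
      case 2
      then have "b \<noteq> c" "b \<notin> set_tree (map_tree g r')"
        using disjoint image l'(2) \<open>c \<in> R\<close> by (auto simp: tree.set_map)
      then have "psi_at b T' = relabel_node R (psi_at b l') c r'"
        by (simp add: T'_Node relabel_node_def g_def psi_at_not_in)
      then show ?thesis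
        using in_orbit Node.IH(1)[OF hr(1) T'(2)] T' by auto
    next
      case (3 x)
      have "psi_at x r' \<in> hr_orbit r"
        using Node.IH(2)[OF hr(2) T'(4)] .
      then have "set_tree (psi_at x r') = set_tree r'"
        using hr_orbit_is_hr[OF hr(2)] r' by blast
      moreover have "psi_at b (map_tree g r') = map_tree g (psi_at x r')"
        using 3 mono r' by (simp add: psi_at_map_tree)
      moreover have "b \<noteq> c" "b \<notin> set_tree l'"
        using 3 image disjoint l' by auto
      ultimately have "psi_at b T' = relabel_node R l' c (psi_at x r')"
        by (simp add: T'_Node relabel_node_def g_def psi_at_not_in)
      then show ?thesis
        using in_orbit \<open>psi_at x r' \<in> hr_orbit r\<close> T' by auto
    next
      case 4
      then show ?thesis
        using Node.prems(2) by (simp add: psi_at_not_in)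
    qed
  qed
qed simp

(* Closing under psi_at b for every label b, not only for those at positions 1..n, lets the orbits
   of the subtrees be lifted to the whole tree. *)
inductive_set psi_reach :: "nat tree \<Rightarrow> nat tree set" for T where
  psi_reach_refl: "T \<in> psi_reach T"
| psi_reach_step: "T' \<in> psi_reach T \<Longrightarrow> psi_at b T' \<in> psi_reach T"

lemma psi_reach_trans: "T2 \<in> psi_reach T1 \<Longrightarrow> T1 \<in> psi_reach T0 \<Longrightarrow> T2 \<in> psi_reach T0"
  by (induction rule: psi_reach.induct) (auto intro: psi_reach_step)

lemma psi_reach_subset_hr_orbit:
  assumes "is_hr T"
  shows "psi_reach T \<subseteq> hr_orbit T"
proof
  fix T'
  assume "T' \<in> psi_reach T"
  then show "T' \<in> hr_orbit T"
    by (induction rule: psi_reach.induct)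
      (auto intro: self_in_hr_orbit[OF assms] psi_at_in_hr_orbit[OF assms])
qed

lemma set_tree_psi_reach: "is_hr T \<Longrightarrow> T' \<in> psi_reach T \<Longrightarrow> set_tree T' = set_tree T"
  using psi_reach_subset_hr_orbit hr_orbit_is_hr by blast

lemma psi_reach_Node_left:
  assumes "is_hr l" "a \<notin> set_tree l" "set_tree l \<inter> set_tree r = {}" "l' \<in> psi_reach l"
  shows "Node l' a r \<in> psi_reach (Node l a r)"
  using assms(4)
proof (induction rule: psi_reach.induct)
  case (psi_reach_step l' b)
  show ?case
  proof (cases "b \<in> set_tree l'")
    case True
    then have "b \<noteq> a" "b \<notin> set_tree r"
      using assms(2,3) set_tree_psi_reach[OF assms(1) psi_reach_step.hyps] by auto
    then have "psi_at b (Node l' a r) = Node (psi_at b l') a r"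
      by (simp add: psi_at_not_in)
    then show ?thesis
      using psi_reach.intros(2)[OF psi_reach_step.IH, of b] by simp
  next
    case False
    then show ?thesis
      using psi_reach_step.IH by (simp add: psi_at_not_in)
  qed
qed (rule psi_reach_refl)

lemma psi_reach_Node_right:
  assumes "is_hr r" "a \<notin> set_tree r" "set_tree l \<inter> set_tree r = {}" "r' \<in> psi_reach r"
  shows "Node l a r' \<in> psi_reach (Node l a r)"
  using assms(4)
proof (induction rule: psi_reach.induct)
  case (psi_reach_step r' b)
  show ?case
  proof (cases "b \<in> set_tree r'")
    case True
    then have "b \<noteq> a" "b \<notin> set_tree l"
      using assms(2,3) set_tree_psi_reach[OF assms(1) psi_reach_step.hyps] by auto
    then have "psi_at b (Node l a r') = Node l a (psi_at b r')"
      by (simp add: psi_at_not_in)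
    then show ?thesis
      using psi_reach.intros(2)[OF psi_reach_step.IH, of b] by simp
  next
    case False
    then show ?thesis
      using psi_reach_step.IH by (simp add: psi_at_not_in)
  qed
qed (rule psi_reach_refl)

lemma psi_reach_Node:
  assumes "is_hr (Node l a r)" "l' \<in> psi_reach l" "r' \<in> psi_reach r"
  shows "Node l' a r' \<in> psi_reach (Node l a r)"
proof -
  have "is_hr l" "is_hr r" "a \<notin> set_tree l" "a \<notin> set_tree r" "set_tree l \<inter> set_tree r = {}"
    using assms(1) by auto
  moreover from this have "set_tree l' = set_tree l"
    using set_tree_psi_reach assms(2) by blast
  ultimately have "Node l' a r \<in> psi_reach (Node l a r)" "Node l' a r' \<in> psi_reach (Node l' a r)"
    using assms(2,3) by (auto intro: psi_reach_Node_left psi_reach_Node_right)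
  then show ?thesis
    using psi_reach_trans by blast
qed

lemma hr_orbit_subset_psi_reach: "is_hr T \<Longrightarrow> hr_orbit T \<subseteq> psi_reach T"
proof (induction T)
  case (Node l a r)
  show ?case
  proof (cases "l = Leaf \<and> r = Leaf")
    case False
    then have inner: "l \<noteq> Leaf \<or> r \<noteq> Leaf"
      by simp
    define R where "R = insert a (set_tree r)"
    show ?thesis
    proof
      fix T'
      assume "T' \<in> hr_orbit (Node l a r)"
      then obtain l' c r' where T': "T' = relabel_node R l' c r'" "l' \<in> hr_orbit l"
        "c \<in> {Min R, Max R}" "r' \<in> hr_orbit r"
        using hr_orbit_inner_iff[OF inner] unfolding R_def by blast
      have hr: "is_hr l" "is_hr r"
        using Node.prems by auto
      then have l': "set_tree l' = set_tree l" and r': "set_tree r' = set_tree r"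
        using hr_orbit_is_hr[OF hr(1) T'(2)] hr_orbit_is_hr[OF hr(2) T'(4)] by auto
      note inner_facts = is_hr_inner_node[OF Node.prems inner, folded R_def]
      have "relabel_node R l' a r' = Node l' a r'"
        using Node.prems relabel_node_self[of a r' l'] r' by (simp add: R_def)
      then have reach: "relabel_node R l' a r' \<in> psi_reach (Node l a r)"
        using psi_reach_Node[OF Node.prems] Node.IH hr T'(2,4) by auto
      show "T' \<in> psi_reach (Node l a r)"
      proof (cases "c = a")
        case True
        then show ?thesis
          using T' reach by simp
      next
        case False
        then have "c = (if a = Min R then Max R else Min R)"
          using T'(3) inner_facts(2) by auto
        moreover have "finite R" "card R = Suc (card (set_tree r'))" "r' \<noteq> Leaf"
          using Node.prems r' inner_facts(1) by (auto simp: R_def)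
        ultimately have "psi_at a (relabel_node R l' a r') = T'"
          using T'(1) inner_facts(2,4) l' psi_at_relabel_node[of R r' a l'] by simp
        then show ?thesis
          using psi_reach_step[OF reach, of a] by simp
      qed
    qed
  qed (use psi_reach_refl in simp)
qed (simp add: psi_reach_refl)

lemma Orb_subset_psi_reach: "Orb n T \<subseteq> psi_reach T"
proof
  fix T'
  assume "T' \<in> Orb n T"
  then show "T' \<in> psi_reach T"
    by (induction rule: Orb.induct) (auto simp: psi_def intro: psi_reach.intros)
qed

lemma psi_reach_subset_Orb:
  assumes "is_hr T" "size T = n"
  shows "psi_reach T \<subseteq> Orb n T"
proof
  fix T'
  assume "T' \<in> psi_reach T"
  then show "T' \<in> Orb n T"
  proof (induction rule: psi_reach.induct)
    case (psi_reach_step T' b)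
    have "is_hr T'" "set_tree T' = set_tree T"
      using psi_reach_subset_hr_orbit[OF assms(1)] hr_orbit_is_hr[OF assms(1)] psi_reach_step.hyps
      by auto
    then have "size T' = n"
      using assms distinct_card[of "inorder T'"] distinct_card[of "inorder T"] by simp
    show ?case
    proof (cases "b \<in> set_tree T'")
      case True
      then obtain j where "j < size T'" "inorder T' ! j = b"
        by (metis in_set_conv_nth length_inorder set_inorder)
      then show ?thesis
        using Orb.Orb_step[OF psi_reach_step.IH, of "Suc j"] \<open>size T' = n\<close> by (simp add: psi_def)
    next
      case False
      then show ?thesis
        using psi_reach_step.IH by (simp add: psi_at_not_in)
    qed
  qed (rule Orb.Orb_refl)
qed

lemma Orb_eq_hr_orbit: "is_hr T \<Longrightarrow> size T = n \<Longrightarrow> Orb n T = hr_orbit T"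
  using Orb_subset_psi_reach psi_reach_subset_Orb psi_reach_subset_hr_orbit hr_orbit_subset_psi_reach
  by (metis subset_antisym)

section \<open>The generating function of an orbit\<close>

lemma relabel_node_inj:
  assumes "relabel_node R l1 c1 r1 = relabel_node R l2 c2 r2" "set_tree r1 = set_tree r2"
    and "finite R" "c1 \<in> R" "card R = Suc (card (set_tree r1))"
  shows "l1 = l2 \<and> c1 = c2 \<and> r1 = r2"
proof -
  define g where "g = ord_bij (set_tree r1) (R - {c1})"
  have "l1 = l2" "c1 = c2"
    using assms(1) by (simp_all add: relabel_node_def)
  moreover have "r1 = r2"
  proof (rule tree.inj_map_strong)
    show "map_tree g r1 = map_tree g r2"
      using assms(1,2) \<open>c1 = c2\<close> by (simp add: relabel_node_def g_def)
    have "inj_on g (set_tree r1)"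
      using ord_bij_Diff_singleton(1)[OF assms(3-5)] strict_mono_on_imp_inj_on unfolding g_def by blast
    then show "z = z'" if "z \<in> set_tree r1" "z' \<in> set_tree r2" "g z = g z'" for z z'
      using that assms(2) by (auto dest: inj_onD)
  qed
  ultimately show ?thesis
    by blast
qed

lemma inj_on_relabel_node:
  assumes "finite R" "C \<subseteq> R" "\<forall>r'\<in>B. set_tree r' = X" "card R = Suc (card X)"
  shows "inj_on (\<lambda>(l', c, r'). relabel_node R l' c r') (A \<times> C \<times> B)"
proof (rule inj_onI)
  fix x y
  assume "x \<in> A \<times> C \<times> B" "y \<in> A \<times> C \<times> B"
    and "(\<lambda>(l', c, r'). relabel_node R l' c r') x = (\<lambda>(l', c, r'). relabel_node R l' c r') y"
  moreover obtain l1 c1 r1 l2 c2 r2 where "x = (l1, c1, r1)" "y = (l2, c2, r2)"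
    by (cases x, cases y) auto
  ultimately show "x = y"
    using assms relabel_node_inj[of R l1 c1 r1 l2 c2 r2] by auto
qed

lemma max_alt_relabel_node:
  fixes d :: bool
  assumes "is_hr (Node l a r)" "l \<noteq> Leaf \<or> r \<noteq> Leaf"
    and "l' \<in> hr_orbit l" "r' \<in> hr_orbit r"
    and "c \<in> {Min (insert a (set_tree r)), Max (insert a (set_tree r))}"
  defines "R \<equiv> insert a (set_tree r)" and "p \<equiv> max_alt d (inorder l')"
  shows "max_alt d (inorder (relabel_node R l' c r')) =
    (if c = Min R then p + of_bool (even p \<noteq> d) + max_alt True (inorder r')
     else p + of_bool (even p = d) + max_alt False (inorder r'))"
proof -
  define g where "g = ord_bij (set_tree r') (R - {c})"
  define S where "S = set_tree l \<union> R"
  have "is_hr l" "is_hr r"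
    using assms(1) by auto
  then have l': "set_tree l' = set_tree l" and r': "set_tree r' = set_tree r"
    using hr_orbit_is_hr[OF _ assms(3)] hr_orbit_is_hr[OF _ assms(4)] by auto
  note inner_facts = is_hr_inner_node[OF assms(1,2), folded R_def]
  have fin: "finite R" "R \<noteq> {}" "finite S"
    by (auto simp: R_def S_def)
  then have "c \<in> R"
    using assms(5) Min_in[OF fin(1,2)] Max_in[OF fin(1,2)] unfolding R_def by blast
  moreover have "card R = Suc (card (set_tree r'))"
    using assms(1) r' by (simp add: R_def)
  ultimately have mono: "strict_mono_on (set_tree r') g" and image: "g ` set_tree r' = R - {c}"
    using ord_bij_Diff_singleton[OF fin(1)] unfolding g_def by auto
  have word: "inorder (relabel_node R l' c r') = inorder l' @ c # map g (inorder r')"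
    by (simp add: relabel_node_def g_def inorder_map)
  have right: "max_alt e (map g (inorder r')) = max_alt e (inorder r')" for e
    using mono max_alt_map[of "inorder r'" True g e] by (simp add: strict_mono_on_less)
  have "map g (inorder r') \<noteq> []"
    using inner_facts(1) r' by auto
  have others: "x \<in> S" "x \<noteq> c" if "x \<in> set (inorder l') \<union> set (map g (inorder r'))" for x
    using that image l' assms(1) \<open>c \<in> R\<close> by (auto simp: R_def S_def)
  show ?thesis
  proof (cases "c = Min R")
    case True
    then have "c < x" if "x \<in> set (inorder l') \<union> set (map g (inorder r'))" for x
      using others[OF that] Min_le[OF fin(3)] inner_facts(4) by (fastforce simp: S_def)
    then show ?thesis
      using True max_alt_append_min[of "inorder l'" "map g (inorder r')" c d]
        \<open>map g (inorder r') \<noteq> []\<close>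
      unfolding word right p_def by simp
  next
    case False
    then have "c = Max R"
      using assms(5) unfolding R_def by simp
    then have "x < c" if "x \<in> set (inorder l') \<union> set (map g (inorder r'))" for x
      using others[OF that] Max_ge[OF fin(3)] inner_facts(5) by (fastforce simp: S_def)
    then show ?thesis
      using False max_alt_append_max[of "inorder l'" "map g (inorder r')" c d]
        \<open>map g (inorder r') \<noteq> []\<close>
      unfolding word right p_def by simp
  qed
qed

definition leaf_poly :: "nat tree \<Rightarrow> int poly" where
  "leaf_poly t = monom 1 (leaf_count t) * [:1, 1:] ^ (size t - leaf_count t)"

lemma leaf_count_le_size: "leaf_count t \<le> size t"
  by (induction t) auto

lemma leaf_poly_inner:
  assumes "l \<noteq> Leaf \<or> r \<noteq> Leaf"
  shows "leaf_poly (Node l a r) = leaf_poly l * [:1, 1:] * leaf_poly r"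
proof -
  have leaves: "leaf_count (Node l a r) = leaf_count l + leaf_count r"
    using assms by auto
  have "size (Node l a r) - leaf_count (Node l a r) =
      Suc ((size l - leaf_count l) + (size r - leaf_count r))"
    using assms leaf_count_le_size[of l] leaf_count_le_size[of r] by auto
  moreover have "monom (1::int) (m + n) = monom 1 m * monom 1 n" for m n
    by (simp add: mult_monom)
  ultimately show ?thesis
    unfolding leaf_poly_def leaves by (simp only: power_Suc power_add mult_ac)
qed

lemma monom_add_of_bool:
  "monom (1::int) (p + of_bool P) + monom 1 (p + of_bool (\<not> P)) = monom 1 p * [:1, 1:]"
proof -
  have "monom (1::int) p * [:1, 1:] = monom 1 p * (1 + monom 1 1)"
    by (simp add: monom_Suc one_pCons)
  also have "\<dots> = monom 1 p + monom 1 (p + 1)"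
    by (simp add: distrib_left mult_monom)
  finally show ?thesis
    by (cases P) simp_all
qed

lemma sum_hr_orbit_Node:
  assumes "is_hr (Node l a r)" "l \<noteq> Leaf \<or> r \<noteq> Leaf"
  defines "R \<equiv> insert a (set_tree r)"
  shows "(\<Sum>T\<in>hr_orbit (Node l a r). h T) =
    (\<Sum>l'\<in>hr_orbit l. \<Sum>c\<in>{Min R, Max R}. \<Sum>r'\<in>hr_orbit r. h (relabel_node R l' c r'))"
proof -
  have "hr_orbit (Node l a r) =
      (\<lambda>(l', c, r'). relabel_node R l' c r') ` (hr_orbit l \<times> {Min R, Max R} \<times> hr_orbit r)"
    using assms(2) by (auto simp: R_def Let_def)
  moreover have "finite R" "R \<noteq> {}" "card R = Suc (card (set_tree r))" "is_hr r"
    using assms(1) by (auto simp: R_def)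
  then have "inj_on (\<lambda>(l', c, r'). relabel_node R l' c r')
      (hr_orbit l \<times> {Min R, Max R} \<times> hr_orbit r)"
    using hr_orbit_is_hr[OF \<open>is_hr r\<close>] Min_in[of R] Max_in[of R]
    by (intro inj_on_relabel_node[where X = "set_tree r"]) auto
  ultimately show ?thesis
    by (simp add: sum.reindex sum.cartesian_product case_prod_unfold)
qed

lemma sum_relabel_node_max_alt:
  fixes d :: bool
  assumes "is_hr (Node l a r)" "l \<noteq> Leaf \<or> r \<noteq> Leaf" "l' \<in> hr_orbit l"
    and "\<And>e. (\<Sum>r'\<in>hr_orbit r. monom (1::int) (max_alt e (inorder r'))) = leaf_poly r"
  defines "R \<equiv> insert a (set_tree r)" and "p \<equiv> max_alt d (inorder l')"
  shows "(\<Sum>c\<in>{Min R, Max R}. \<Sum>r'\<in>hr_orbit r. monom 1 (max_alt d (inorder (relabel_node R l' c r'))))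
    = monom 1 p * [:1, 1:] * leaf_poly r"
proof -
  have "Min R \<noteq> Max R"
    using is_hr_inner_node(3)[OF assms(1,2)] by (simp add: R_def)
  then have "(\<Sum>c\<in>{Min R, Max R}. \<Sum>r'\<in>hr_orbit r.
        monom (1::int) (max_alt d (inorder (relabel_node R l' c r'))))
      = (\<Sum>r'\<in>hr_orbit r. monom 1 (p + of_bool (even p \<noteq> d)) * monom 1 (max_alt True (inorder r')))
        + (\<Sum>r'\<in>hr_orbit r. monom 1 (p + of_bool (even p = d)) * monom 1 (max_alt False (inorder r')))"
    using max_alt_relabel_node[OF assms(1-3), where d = d, folded R_def p_def]
    by (simp add: mult_monom)
  also have "\<dots> = (monom 1 (p + of_bool (even p \<noteq> d)) + monom 1 (p + of_bool (even p = d))) * leaf_poly r"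
    by (simp add: sum_distrib_left[symmetric] distrib_right assms(4))
  also have "\<dots> = monom 1 p * [:1, 1:] * leaf_poly r"
    using monom_add_of_bool[of p "even p \<noteq> d"] by simp
  finally show ?thesis .
qed

lemma sum_hr_orbit_max_alt:
  "is_hr T \<Longrightarrow> (\<Sum>T'\<in>hr_orbit T. monom (1::int) (max_alt d (inorder T'))) = leaf_poly T"
proof (induction T arbitrary: d)
  case (Node l a r)
  show ?case
  proof (cases "l = Leaf \<and> r = Leaf")
    case True
    then show ?thesis
      by (simp add: leaf_poly_def)
  next
    case False
    then have inner: "l \<noteq> Leaf \<or> r \<noteq> Leaf"
      by simp
    have hr: "is_hr l" "is_hr r"
      using Node.prems by auto
    have "(\<Sum>T'\<in>hr_orbit (Node l a r). monom (1::int) (max_alt d (inorder T')))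
        = (\<Sum>l'\<in>hr_orbit l. monom 1 (max_alt d (inorder l')) * [:1, 1:] * leaf_poly r)"
      unfolding sum_hr_orbit_Node[OF Node.prems inner]
      using sum_relabel_node_max_alt[OF Node.prems inner _ Node.IH(2)[OF hr(2)]] by simp
    also have "\<dots> = leaf_poly l * [:1, 1:] * leaf_poly r"
      by (simp only: sum_distrib_right[symmetric] Node.IH(1)[OF hr(1)])
    finally show ?thesis
      using leaf_poly_inner[OF inner] by simp
  qed
qed (simp add: leaf_poly_def)

section \<open>The HR-tree of a permutation\<close>

lemma inorder_left_eq_takeWhile:
  assumes "is_hr (Node l a r)"
  defines "w \<equiv> inorder (Node l a r)"
  shows "inorder l = takeWhile (\<lambda>x. x \<notin> {Min (set w), Max (set w)}) w"
proof (cases "l = Leaf \<and> r = Leaf")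
  case True
  then show ?thesis
    by (simp add: w_def)
next
  case False
  then have inner: "l \<noteq> Leaf \<or> r \<noteq> Leaf"
    by simp
  define R where "R = insert a (set_tree r)"
  note inner_facts = is_hr_inner_node[OF assms(1) inner, folded R_def]
  have "set w = set_tree l \<union> R"
    by (auto simp: w_def R_def)
  then have extremes: "{Min (set w), Max (set w)} = {Min R, Max R}"
    using inner_facts(4,5) by simp
  have "finite R" "R \<noteq> {}" "set_tree l \<inter> R = {}"
    using assms(1) by (auto simp: R_def)
  then have "x \<notin> {Min R, Max R}" if "x \<in> set (inorder l)" for x
    using that Min_in Max_in by fastforce
  then have "takeWhile (\<lambda>x. x \<notin> {Min R, Max R}) (inorder l @ a # inorder r)
      = inorder l @ takeWhile (\<lambda>x. x \<notin> {Min R, Max R}) (a # inorder r)"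
    by (rule takeWhile_append2)
  then show ?thesis
    using inner_facts(2) unfolding extremes unfolding w_def by simp
qed

lemma hr_tree_unique:
  "is_hr T1 \<Longrightarrow> is_hr T2 \<Longrightarrow> inorder T1 = inorder T2 \<Longrightarrow> T1 = T2"
proof (induction T1 arbitrary: T2)
  case (Node l1 a1 r1)
  obtain l2 a2 r2 where T2: "T2 = Node l2 a2 r2"
    using Node.prems(3) by (cases T2) simp_all
  have word: "inorder (Node l1 a1 r1) = inorder (Node l2 a2 r2)"
    using Node.prems(3) T2 by simp
  have "is_hr (Node l2 a2 r2)"
    using Node.prems(2) T2 by simp
  from inorder_left_eq_takeWhile[OF Node.prems(1), unfolded word] inorder_left_eq_takeWhile[OF this]
  have "inorder l1 = inorder l2"
    by (rule trans[OF _ sym])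
  moreover from this word have "a1 = a2" "inorder r1 = inorder r2"
    by simp_all
  ultimately show ?case
    using Node.IH Node.prems(1,2) T2 by auto
qed simp

lemma hr_cond_Node_first_extreme:
  assumes "hr_cond l" "hr_cond r" "distinct (inorder (Node l a r))"
  defines "S \<equiv> set_tree (Node l a r)"
  assumes "a \<in> {Min S, Max S}" "\<forall>x\<in>set_tree l. x \<notin> {Min S, Max S}"
  shows "hr_cond (Node l a r)"
proof -
  have fin: "finite S" "S \<noteq> {}"
    by (auto simp: S_def)
  have "r \<noteq> Leaf \<and> (if a = Min S then Max S \<in> set_tree r else Min S \<in> set_tree r)"
    if "l \<noteq> Leaf \<or> r \<noteq> Leaf"
  proof -
    have "card S = size l + size r + 1"
      using distinct_card[OF assms(3)] by (simp add: S_def)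
    then have "2 \<le> card S"
      using that by (auto simp: neq_Leaf_iff)
    have "Min S \<noteq> Max S"
    proof
      assume "Min S = Max S"
      then have "x = y" if "x \<in> S" "y \<in> S" for x y
        using fin that by (metis Max_ge Min_le antisym)
      then have "card S \<le> 1"
        using card_le_Suc0_iff_eq[OF fin(1)] by simp
      with \<open>2 \<le> card S\<close> show False
        by simp
    qed
    define m where "m = (if a = Min S then Max S else Min S)"
    have "m \<in> S" "m \<noteq> a" "m \<notin> set_tree l"
      using assms(5,6) Min_in[OF fin] Max_in[OF fin] \<open>Min S \<noteq> Max S\<close> by (auto simp: m_def)
    then have "m \<in> set_tree r"
      by (simp add: S_def)
    then show ?thesis
      by (auto simp: m_def)
  qed
  then show ?thesis
    using assms(1,2,5) unfolding hr_cond.simps(2) Let_def S_def[symmetric] by blast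
qed

lemma hr_tree_exists: "distinct w \<Longrightarrow> \<exists>T. hr_cond T \<and> inorder T = w"
proof (induction "length w" arbitrary: w rule: less_induct)
  case less
  show ?case
  proof (cases "w = []")
    case True
    then show ?thesis
      by (intro exI[of _ Leaf]) simp
  next
    case False
    define P where "P x \<longleftrightarrow> x \<notin> {Min (set w), Max (set w)}" for x
    have "Min (set w) \<in> set w"
      using False by simp
    then obtain a v where "dropWhile P w = a # v"
      by (cases "dropWhile P w") (auto simp: P_def)
    then have w: "w = takeWhile P w @ a # v" and "\<not> P a"
      by (simp_all add: dropWhile_eq_Cons_conv)
    from less.prems have "distinct (takeWhile P w @ a # v)"
      by (simp only: w[symmetric])
    moreover have "length w = length (takeWhile P w) + Suc (length v)"
      using arg_cong[where f = length, OF w] by simp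
    ultimately obtain l r where l: "hr_cond l" "inorder l = takeWhile P w"
      and r: "hr_cond r" "inorder r = v"
      using less.hyps[of "takeWhile P w"] less.hyps[of v] by auto
    have word: "inorder (Node l a r) = w"
      using l r w by simp
    then have "set_tree (Node l a r) = set w"
      by (metis set_inorder)
    moreover have "\<forall>x\<in>set_tree l. P x"
      using l(2) by (metis set_inorder set_takeWhileD)
    ultimately have "hr_cond (Node l a r)"
      using l(1) r(1) less.prems word \<open>\<not> P a\<close>
      by (intro hr_cond_Node_first_extreme) (auto simp: P_def)
    then show ?thesis
      using word by blast
  qed
qed

lemma T_of_spec:
  assumes "is_perm_word n \<pi>"
  shows "hr_tree n (T_of n \<pi>)" "inorder (T_of n \<pi>) = \<pi>"
proof -
  obtain T where T: "hr_cond T" "inorder T = \<pi>"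
    using hr_tree_exists assms unfolding is_perm_word_def by blast
  then have "hr_tree n T"
    using assms unfolding hr_tree_def is_perm_word_def by (metis set_inorder)
  have "T_of n \<pi> = T"
    unfolding T_of_def
  proof (rule the_equality)
    show "hr_tree n T \<and> inorder T = \<pi>"
      using \<open>hr_tree n T\<close> T(2) by simp
    show "T' = T" if "hr_tree n T' \<and> inorder T' = \<pi>" for T'
      using that T assms hr_tree_unique[of T' T] unfolding hr_tree_def is_perm_word_def by simp
  qed
  then show "hr_tree n (T_of n \<pi>)" "inorder (T_of n \<pi>) = \<pi>"
    using \<open>hr_tree n T\<close> T(2) by simp_all
qed

theorem mainTheorem3:
  fixes n :: nat and \<pi> :: "nat list"
  assumes "n \<ge> 1" and "is_perm_word n \<pi>"
  shows "(\<Sum>T\<in>Orb n (T_of n \<pi>). monom (1::int) (as_len (inorder T)))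
       = monom 1 (leaf_count (T_of n \<pi>)) * [:1, 1:] ^ (n - leaf_count (T_of n \<pi>))"
proof -
  define T where "T = T_of n \<pi>"
  have "hr_tree n T" "inorder T = \<pi>"
    using T_of_spec[OF assms(2)] by (simp_all add: T_def)
  then have hr: "is_hr T" and size: "size T = n"
    using assms(2) distinct_card[of \<pi>] by (auto simp: hr_tree_def is_perm_word_def)
  have "as_len (inorder T') = max_alt True (inorder T')" if "T' \<in> hr_orbit T" for T'
    using hr_orbit_is_hr[OF hr that] size assms(1) by (intro as_len_eq_max_alt) auto
  then have "(\<Sum>T'\<in>Orb n T. monom (1::int) (as_len (inorder T'))) =
      (\<Sum>T'\<in>hr_orbit T. monom 1 (max_alt True (inorder T')))"
    by (simp add: Orb_eq_hr_orbit[OF hr size])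
  also have "\<dots> = leaf_poly T"
    by (rule sum_hr_orbit_max_alt[OF hr])
  also have "\<dots> = monom 1 (leaf_count T) * [:1, 1:] ^ (n - leaf_count T)"
    by (simp add: leaf_poly_def size)
  finally show ?thesis
    by (simp only: T_def)
qed

end
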